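(* Let $d>0$ be square-free and $A=\begin{pmatrix}a&B\\ \bar B&c\end{pmatrix}$ with $a,c\in\mathbb{Z}$, $B\in\mathcal{O}_d$, $D=|B|^2-ac>0$. If $A$ corresponds to an embedded totally geodesic surface in $\Omega_d$, then $$4D\le \min_{x,y\in\mathcal{O}_d:\ Q_A(x,y)\neq0} Q_A(x,y)^2,$$ where $Q_A(x,y)=\begin{pmatrix}x&y\end{pmatrix}A\begin{pmatrix}\bar x\\ \bar y\end{pmatrix}$.
   Context: $\mathcal{O}_d$ is the ring of integers of $\mathbb{Q}(\sqrt{-d})$, $\Gamma_d=\mathrm{PSL}(2,\mathcal{O}_d)$, $\Omega_d=\mathbb{H}^3/\Gamma_d$. The surface corresponding to $A$ is the image in $\Omega_d$ of the hyperbolic plane $H$ bounded by the circle/line $\{z: Q_A(z,1)=0\}$; it is embedded if for all $\gamma\in\Gamma_d$, $\gamma H=H$ or $\gamma H\cap H=\emptyset$. *)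

theory Defs
  imports "HOL-Analysis.Analysis" "HOL-Computational_Algebra.Computational_Algebra"
begin

definition Od :: "nat \<Rightarrow> complex set" where
  "Od d = {z. algebraic_int z \<and>
     (\<exists>p q :: rat. z = of_rat p + of_rat q * (complex_of_real (sqrt (real d)) * \<i>))}"

text \<open>Gamma_d = PSL(2,O_d). A matrix [[al,be],[ga,de]] is stored as a 4-tuple;
  since +M and -M act identically, quantifying over SL(2,O_d) is the same as over PSL(2,O_d).\<close>
definition SL2Od :: "nat \<Rightarrow> (complex \<times> complex \<times> complex \<times> complex) set" where
  "SL2Od d = {(al, be, ga, de). al \<in> Od d \<and> be \<in> Od d \<and> ga \<in> Od d \<and> de \<in> Od d
                               \<and> al * de - be * ga = 1}"

definition H3 :: "(complex \<times> real) set" where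
  "H3 = {(z, t). t > 0}"

text \<open>Poincare extension of the Moebius transformation of [[al,be],[ga,de]] (det 1)
  to the upper half-space (Elstrodt-Grunewald-Mennicke formula).\<close>
definition moeb_act :: "complex \<times> complex \<times> complex \<times> complex \<Rightarrow> complex \<times> real \<Rightarrow> complex \<times> real" where
  "moeb_act M P = (case M of (al, be, ga, de) \<Rightarrow> case P of (z, t) \<Rightarrow>
     (let N = (cmod (ga * z + de))\<^sup>2 + (cmod ga)\<^sup>2 * t\<^sup>2 in
       (((al * z + be) * cnj (ga * z + de) + al * cnj ga * complex_of_real (t\<^sup>2)) / complex_of_real N,
        t / N)))"

text \<open>Hermitian form Q_A(x,y) = (x y) A (conj x, conj y)^T for A = [[a,B],[conj B,c]].
  It is real-valued; we record its value as a real number.\<close>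
definition QA :: "int \<Rightarrow> complex \<Rightarrow> int \<Rightarrow> complex \<Rightarrow> complex \<Rightarrow> real" where
  "QA a B c x y = Re ((x * of_int a + y * cnj B) * cnj x + (x * B + y * of_int c) * cnj y)"

text \<open>The hyperbolic plane in H^3 bounded by the circle/line {z. Q_A(z,1) = 0}:
  the hemisphere / vertical half-plane a(|z|^2+t^2) + 2 Re(B z) + c = 0, t > 0.\<close>
definition plane_of :: "int \<Rightarrow> complex \<Rightarrow> int \<Rightarrow> (complex \<times> real) set" where
  "plane_of a B c = {(z, t). t > 0 \<and>
      of_int a * ((cmod z)\<^sup>2 + t\<^sup>2) + 2 * Re (B * z) + of_int c = 0}"

definition embedded_surface :: "nat \<Rightarrow> int \<Rightarrow> complex \<Rightarrow> int \<Rightarrow> bool" where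
  "embedded_surface d a B c \<longleftrightarrow>
     (\<forall>M \<in> SL2Od d. moeb_act M ` plane_of a B c = plane_of a B c
                    \<or> moeb_act M ` plane_of a B c \<inter> plane_of a B c = {})"

end

theory Submission
  imports Defs "Berlekamp_Zassenhaus.Factor_Bound"
begin

(* If Q_A(x, y) = n is nonzero for some x, y in O_d, complete (x, y) to a complex matrix
   g = [[x, u], [y, v]] of determinant 1 and let T be the translation z -> z + 1. The parabolic
   element M = g T g^-1 = [[1 - xy, x^2], [-y^2, 1 + xy]] has entries in O_d, although g need not.
   The preimage of H under g is the plane of the Hermitian form g^T A conj(g), whose leading
   coefficient is n and whose discriminant is still D: a hemisphere of radius sqrt(D) / |n|, on
   which M acts as T. If n^2 < 4 D, this hemisphere and its translate by 1 are different but
   intersect, so M H meets H without being equal to it, and the surface is not embedded.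
   That M lies in Gamma_d needs O_d to be a ring; this follows from the description of O_d as the
   numbers (s + t sqrt(-d)) / 2 with 4 dividing s^2 + d t^2, which rests on d being squarefree
   and on Gauss's lemma. *)

section \<open>Quadratic algebraic integers\<close>

lemma monic_rat_factor_of_monic_int_poly:
  fixes P :: "int poly" and f g :: "rat poly"
  assumes factor: "map_poly of_int P = f * g"
    and monic_P: "lead_coeff P = 1" and monic_f: "lead_coeff f = 1"
  shows "\<exists>F. f = map_poly of_int F"
proof -
  obtain r F where normalized: "rat_to_normalized_int_poly f = (r, F)"
    by force
  note F = rat_to_normalized_int_poly[OF normalized]
  obtain G where "P = F * Polynomial.smult (content P) G"
    using rat_to_int_factor_explicit[OF factor normalized] by blast
  then have "lead_coeff F * lead_coeff (Polynomial.smult (content P) G) = 1"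
    using monic_P by (metis lead_coeff_mult)
  then have "lead_coeff F = 1 \<or> lead_coeff F = -1"
    using zmult_eq_1_iff by blast
  moreover have "1 = r * of_int (lead_coeff F)"
    using F(1) monic_f by (metis lead_coeff_smult of_int_hom.hom_lead_coeff)
  ultimately have "r = 1"
    using F(2) by auto
  then show ?thesis
    using F(1) by auto
qed

lemma Re_complex_of_rat [simp]: "Re (of_rat q) = of_rat q"
  by (cases q) (simp add: of_rat_rat)

lemma Im_complex_of_rat [simp]: "Im (of_rat q) = 0"
  by (cases q) (simp add: of_rat_rat)

lemma linear_rat_poly_nonreal_root_eq_0:
  fixes r :: "rat poly" and z :: complex
  assumes "degree r \<le> 1" and "poly (map_poly of_rat r) z = 0" and "Im z \<noteq> 0"
  shows "r = 0"
proof -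
  have "r = [:Polynomial.coeff r 0, Polynomial.coeff r 1:]"
    using assms(1) by (intro poly_eqI) (auto simp: coeff_pCons split: nat.splits intro!: coeff_eq_0)
  then obtain a b where r: "r = [:a, b:]"
    by blast
  then have root: "of_rat a + z * of_rat b = 0"
    using assms(2) by (simp add: of_rat_hom.map_poly_pCons_hom)
  from arg_cong[OF root, of Im] have "Im z * of_rat b = 0"
    by simp
  with assms(3) have "b = 0"
    by simp
  with root r show ?thesis
    by simp
qed

lemma rat_quadratic_dvd_of_common_nonreal_root:
  fixes p q :: "rat poly" and z :: complex
  assumes "degree q = 2" and "poly (map_poly of_rat q) z = 0"
    and "poly (map_poly of_rat p) z = 0" and "Im z \<noteq> 0"
  shows "q dvd p"
proof -
  have "q \<noteq> 0"
    using assms(1) by auto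
  define P Q where "P = map_poly (of_rat :: rat \<Rightarrow> complex) p"
    and "Q = map_poly (of_rat :: rat \<Rightarrow> complex) q"
  have "poly P z = poly Q z * poly (P div Q) z + poly (P mod Q) z"
    by (metis mult_div_mod_eq poly_add poly_mult)
  then have "poly (map_poly of_rat (p mod q)) z = 0"
    using assms(2,3) by (simp add: P_def Q_def of_rat_hom.map_poly_mod)
  moreover have "degree (p mod q) \<le> 1"
    using degree_mod_less[OF \<open>q \<noteq> 0\<close>, of p] assms(1) by force
  ultimately have "p mod q = 0"
    using linear_rat_poly_nonreal_root_eq_0 assms(4) by blast
  then show ?thesis
    by (simp add: mod_eq_0_iff_dvd)
qed

lemma algebraic_int_quadratic_coeffs_Ints:
  fixes z :: complex and s N :: rat
  assumes "algebraic_int z" and "Im z \<noteq> 0"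
    and root: "z\<^sup>2 - of_rat s * z + of_rat N = 0"
  shows "s \<in> \<int>" and "N \<in> \<int>"
proof -
  obtain P :: "int poly" where P: "poly (map_poly of_int P) z = 0" "lead_coeff P = 1"
    using assms(1) by (auto simp: algebraic_int_altdef_ipoly)
  define q :: "rat poly" where "q = [:N, -s, 1:]"
  have "poly (map_poly of_rat q) z = 0"
    using root by (simp add: q_def of_rat_minus power2_eq_square algebra_simps)
  moreover have "poly (map_poly of_rat (map_poly of_int P :: rat poly)) z = 0"
    using P(1) by (simp add: map_poly_map_poly o_def)
  ultimately have "q dvd map_poly of_int P"
    using rat_quadratic_dvd_of_common_nonreal_root assms(2) by (simp add: q_def)
  then obtain g where "map_poly of_int P = q * g"
    by blast
  moreover have "lead_coeff q = 1"
    by (simp add: q_def)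
  ultimately obtain F where "q = map_poly of_int F"
    using monic_rat_factor_of_monic_int_poly P(2) by blast
  then have "Polynomial.coeff q 0 \<in> \<int>" and "Polynomial.coeff q 1 \<in> \<int>"
    by (simp_all add: of_int_hom.coeff_map_poly_hom)
  then show "s \<in> \<int>" and "N \<in> \<int>"
    by (simp_all add: q_def)
qed

section \<open>The ring of integers \<open>O\<^sub>d\<close>\<close>

abbreviation sqrt_minus :: "nat \<Rightarrow> complex" where
  "sqrt_minus d \<equiv> complex_of_real (sqrt (real d)) * \<i>"

lemma sqrt_minus_mult_self: "sqrt_minus d * sqrt_minus d = - of_nat d"
proof -
  have "sqrt_minus d * sqrt_minus d = complex_of_real (sqrt (real d) * sqrt (real d)) * (\<i> * \<i>)"
    by (simp only: of_real_mult ac_simps)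
  then show ?thesis
    by simp
qed

lemma squarefree_mult_square_Ints_imp_Ints:
  fixes q :: rat
  assumes "squarefree d" and "of_nat d * q\<^sup>2 \<in> \<int>"
  shows "q \<in> \<int>"
proof -
  obtain a b where ab: "quotient_of q = (a, b)"
    by force
  then have q: "q = of_int a / of_int b" and "b > 0"
    by (simp_all add: quotient_of_div quotient_of_denom_pos)
  have "Rings.coprime b a"
    using quotient_of_coprime[OF ab] by (rule iffD1[OF Rings.coprime_commute])
  obtain k :: int where "of_nat d * q\<^sup>2 = of_int k"
    using assms(2) Ints_cases by blast
  then have "of_int (int d * a\<^sup>2) = (of_int (k * b\<^sup>2) :: rat)"
    using \<open>b > 0\<close> by (simp add: q power_divide field_simps)
  then have "b\<^sup>2 dvd int d * a\<^sup>2"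
    by (simp only: of_int_eq_iff) simp
  moreover have "Rings.coprime (b\<^sup>2) (a\<^sup>2)"
    using \<open>Rings.coprime b a\<close> by simp
  ultimately have "b\<^sup>2 dvd int d"
    using coprime_dvd_mult_left_iff[of "b\<^sup>2" "a\<^sup>2" "int d"] by simp
  moreover have "b\<^sup>2 = int ((nat b)\<^sup>2)"
    using \<open>b > 0\<close> by simp
  ultimately have "(nat b)\<^sup>2 dvd d"
    by (simp only: int_dvd_int_iff)
  then have "nat b dvd 1"
    using assms(1) unfolding squarefree_def by blast
  then have "b = 1"
    using \<open>b > 0\<close> by simp
  then show ?thesis
    using q by simp
qed

lemma OdI:
  fixes s t :: int
  assumes "4 dvd s\<^sup>2 + int d * t\<^sup>2" and "z = (of_int s + of_int t * sqrt_minus d) / 2"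
  shows "z \<in> Od d"
proof -
  obtain k where k: "s\<^sup>2 + int d * t\<^sup>2 = 4 * k"
    using assms(1) by blast
  have k': "(of_int k :: complex) = (of_int s ^ 2 + of_nat d * of_int t ^ 2) / 4"
    using arg_cong[OF k, of "of_int :: int \<Rightarrow> complex"] by simp
  have "poly [:of_int k, - of_int s, 1:] z = of_int k - of_int s * z + z\<^sup>2"
    by (simp add: algebra_simps power2_eq_square)
  also have "\<dots> = 0"
    unfolding k' assms(2) using sqrt_minus_mult_self[of d] by (simp add: field_simps power2_eq_square)
  finally have "algebraic_int z"
    by (intro algebraic_int.intros[of "[:of_int k, - of_int s, 1:]"])
       (auto simp: coeff_pCons split: nat.splits)
  moreover have "z = of_rat (of_int s / 2) + of_rat (of_int t / 2) * sqrt_minus d"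
    using assms(2) by (simp add: of_rat_divide field_simps)
  ultimately show ?thesis
    unfolding Od_def by blast
qed

lemma algebraic_int_Od_coords:
  fixes p q :: rat
  assumes "squarefree d" and "algebraic_int (of_rat p + of_rat q * sqrt_minus d)"
  shows "2 * p \<in> \<int> \<and> 2 * q \<in> \<int> \<and> p\<^sup>2 + of_nat d * q\<^sup>2 \<in> \<int>"
proof (cases "q = 0")
  case True
  then have "of_rat p \<in> (\<int> :: complex set)"
    using assms(2) rational_algebraic_int_is_int[of "of_rat p"] by simp
  then have "p \<in> \<int>"
    by (metis Ints_cases of_rat_eq_iff of_rat_of_int_eq Ints_of_int)
  with True show ?thesis
    by simp
next
  case False
  define z where "z = of_rat p + of_rat q * sqrt_minus d"
  have "d > 0"
    using assms(1) not_squarefree_0 by (metis gr0I)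
  with False have "Im z \<noteq> 0"
    by (simp add: z_def)
  moreover have "z\<^sup>2 - of_rat (2 * p) * z + of_rat (p\<^sup>2 + of_nat d * q\<^sup>2) = 0"
    using sqrt_minus_mult_self[of d]
    by (simp add: z_def of_rat_add of_rat_mult of_rat_power power2_eq_square algebra_simps)
  ultimately have "2 * p \<in> \<int>" and norm: "p\<^sup>2 + of_nat d * q\<^sup>2 \<in> \<int>"
    using algebraic_int_quadratic_coeffs_Ints assms(2) unfolding z_def by blast+
  have "of_nat d * (2 * q)\<^sup>2 = 4 * (p\<^sup>2 + of_nat d * q\<^sup>2) - (2 * p)\<^sup>2"
    by (simp add: power2_eq_square algebra_simps)
  also have "\<dots> \<in> \<int>"
  proof -
    have "4 * (p\<^sup>2 + of_nat d * q\<^sup>2) \<in> \<int>"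
      using norm by (intro Ints_mult) auto
    moreover have "(2 * p)\<^sup>2 \<in> \<int>"
      using \<open>2 * p \<in> \<int>\<close> by (rule Ints_power)
    ultimately show ?thesis
      by (rule Ints_diff)
  qed
  finally have "2 * q \<in> \<int>"
    using squarefree_mult_square_Ints_imp_Ints assms(1) by blast
  with \<open>2 * p \<in> \<int>\<close> norm show ?thesis
    by blast
qed

lemma OdE:
  assumes "squarefree d" and "z \<in> Od d"
  obtains s t :: int
  where "4 dvd s\<^sup>2 + int d * t\<^sup>2" and "z = (of_int s + of_int t * sqrt_minus d) / 2"
proof -
  obtain p q where z: "z = of_rat p + of_rat q * sqrt_minus d" and "algebraic_int z"
    using assms(2) unfolding Od_def by blast
  then obtain s t n where s: "2 * p = of_int s" and t: "2 * q = of_int t"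
    and n: "p\<^sup>2 + of_nat d * q\<^sup>2 = of_int n"
    using algebraic_int_Od_coords[OF assms(1)] by (metis Ints_cases)
  have "of_int (s\<^sup>2 + int d * t\<^sup>2) = (of_int (4 * n) :: rat)"
    by (simp flip: s t n add: power2_eq_square algebra_simps)
  then have "4 dvd s\<^sup>2 + int d * t\<^sup>2"
    by (simp only: of_int_eq_iff) simp
  moreover have "z = (of_int s + of_int t * sqrt_minus d) / 2"
  proof -
    have "(of_int s :: complex) = of_rat (2 * p)" and "(of_int t :: complex) = of_rat (2 * q)"
      by (simp_all only: s t of_rat_of_int_eq)
    then show ?thesis
      by (simp add: z of_rat_mult field_simps)
  qed
  ultimately show ?thesis
    using that by blast
qed

lemma Od_coords_products_even:
  fixes s1 t1 s2 t2 :: int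
  assumes "4 dvd s1\<^sup>2 + int d * t1\<^sup>2" and "4 dvd s2\<^sup>2 + int d * t2\<^sup>2"
  shows "even (s1 * s2 + int d * t1 * t2) \<and> even (s1 * t2 + s2 * t1)"
proof -
  have "even (s1\<^sup>2 + int d * t1\<^sup>2)" and "even (s2\<^sup>2 + int d * t2\<^sup>2)"
    using assms by (meson dvd_trans even_numeral)+
  then show ?thesis
    by (cases "even (int d)") auto
qed

lemma Od_add:
  assumes "squarefree d" and "x \<in> Od d" and "y \<in> Od d"
  shows "x + y \<in> Od d"
proof -
  obtain s1 t1 where 1: "4 dvd s1\<^sup>2 + int d * t1\<^sup>2" "x = (of_int s1 + of_int t1 * sqrt_minus d) / 2"
    using OdE assms(1,2) by blast
  obtain s2 t2 where 2: "4 dvd s2\<^sup>2 + int d * t2\<^sup>2" "y = (of_int s2 + of_int t2 * sqrt_minus d) / 2"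
    using OdE assms(1,3) by blast
  obtain k1 k2 where k1: "s1\<^sup>2 + int d * t1\<^sup>2 = 4 * k1" and k2: "s2\<^sup>2 + int d * t2\<^sup>2 = 4 * k2"
    using 1(1) 2(1) by (meson dvdE)
  obtain e where e: "s1 * s2 + int d * t1 * t2 = 2 * e"
    using Od_coords_products_even[OF 1(1) 2(1)] by (meson evenE)
  have "(s1 + s2)\<^sup>2 + int d * (t1 + t2)\<^sup>2
      = (s1\<^sup>2 + int d * t1\<^sup>2) + (s2\<^sup>2 + int d * t2\<^sup>2) + 2 * (s1 * s2 + int d * t1 * t2)"
    by (simp add: power2_eq_square algebra_simps)
  also have "\<dots> = 4 * (k1 + k2 + e)"
    unfolding k1 k2 e by simp
  finally have "4 dvd (s1 + s2)\<^sup>2 + int d * (t1 + t2)\<^sup>2"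
    by simp
  moreover have "x + y = (of_int (s1 + s2) + of_int (t1 + t2) * sqrt_minus d) / 2"
    using 1(2) 2(2) by (simp add: field_simps)
  ultimately show ?thesis
    by (rule OdI)
qed

lemma sqrt_minus_coords_mult:
  "(of_int s1 + of_int t1 * sqrt_minus d) / 2 * ((of_int s2 + of_int t2 * sqrt_minus d) / 2)
     = (of_int (s1 * s2 - int d * t1 * t2) + of_int (s1 * t2 + s2 * t1) * sqrt_minus d) / 4"
proof -
  have "(of_int s1 + of_int t1 * sqrt_minus d) * (of_int s2 + of_int t2 * sqrt_minus d)
      = of_int (s1 * s2) + of_int (s1 * t2 + s2 * t1) * sqrt_minus d
        + of_int (t1 * t2) * (sqrt_minus d * sqrt_minus d)"
    by (simp add: algebra_simps)
  also have "\<dots> = of_int (s1 * s2 - int d * t1 * t2) + of_int (s1 * t2 + s2 * t1) * sqrt_minus d"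
    by (simp only: sqrt_minus_mult_self) (simp add: algebra_simps)
  finally have product: "(of_int s1 + of_int t1 * sqrt_minus d) * (of_int s2 + of_int t2 * sqrt_minus d)
      = of_int (s1 * s2 - int d * t1 * t2) + of_int (s1 * t2 + s2 * t1) * sqrt_minus d" .
  show ?thesis
    unfolding times_divide_times_eq product by simp
qed

lemma Od_mult:
  assumes "squarefree d" and "x \<in> Od d" and "y \<in> Od d"
  shows "x * y \<in> Od d"
proof -
  obtain s1 t1 where 1: "4 dvd s1\<^sup>2 + int d * t1\<^sup>2" "x = (of_int s1 + of_int t1 * sqrt_minus d) / 2"
    using OdE assms(1,2) by blast
  obtain s2 t2 where 2: "4 dvd s2\<^sup>2 + int d * t2\<^sup>2" "y = (of_int s2 + of_int t2 * sqrt_minus d) / 2"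
    using OdE assms(1,3) by blast
  obtain k1 k2 where k1: "s1\<^sup>2 + int d * t1\<^sup>2 = 4 * k1" and k2: "s2\<^sup>2 + int d * t2\<^sup>2 = 4 * k2"
    using 1(1) 2(1) by (meson dvdE)
  obtain e t where e: "s1 * s2 + int d * t1 * t2 = 2 * e" and t_eq: "s1 * t2 + s2 * t1 = 2 * t"
    using Od_coords_products_even[OF 1(1) 2(1)] by (meson evenE)
  define s where "s = e - int d * t1 * t2"
  have s_eq: "s1 * s2 - int d * t1 * t2 = 2 * s"
    using e by (simp add: s_def algebra_simps)
  have "4 * (s\<^sup>2 + int d * t\<^sup>2) = (2 * s)\<^sup>2 + int d * (2 * t)\<^sup>2"
    by (simp add: power2_eq_square algebra_simps)
  also have "\<dots> = (s1 * s2 - int d * t1 * t2)\<^sup>2 + int d * (s1 * t2 + s2 * t1)\<^sup>2"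
    unfolding s_eq t_eq ..
  also have "\<dots> = (s1\<^sup>2 + int d * t1\<^sup>2) * (s2\<^sup>2 + int d * t2\<^sup>2)"
    by (simp add: power2_eq_square algebra_simps)
  also have "\<dots> = 4 * (4 * k1 * k2)"
    unfolding k1 k2 by simp
  finally have "s\<^sup>2 + int d * t\<^sup>2 = 4 * (k1 * k2)"
    by simp
  then have "4 dvd s\<^sup>2 + int d * t\<^sup>2"
    by simp
  moreover have "x * y = (of_int s + of_int t * sqrt_minus d) / 2"
    unfolding 1(2) 2(2) sqrt_minus_coords_mult s_eq t_eq by (simp add: field_simps)
  ultimately show ?thesis
    by (rule OdI)
qed

lemma Od_uminus:
  assumes "x \<in> Od d"
  shows "- x \<in> Od d"
proof -
  obtain p q where x: "x = of_rat p + of_rat q * sqrt_minus d" and "algebraic_int x"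
    using assms unfolding Od_def by blast
  have "- x = of_rat (- p) + of_rat (- q) * sqrt_minus d"
    using x by (simp add: of_rat_minus)
  moreover have "algebraic_int (- x)"
    using \<open>algebraic_int x\<close> by (rule algebraic_int_minus)
  ultimately show ?thesis
    unfolding Od_def by blast
qed

lemma Od_diff:
  assumes "squarefree d" and "x \<in> Od d" and "y \<in> Od d"
  shows "x - y \<in> Od d"
  using Od_add[OF assms(1,2) Od_uminus[OF assms(3)]] by simp

lemma Od_1: "1 \<in> Od d"
  by (rule OdI[of 2 d 0]) simp_all

lemma parabolic_in_SL2Od:
  assumes "squarefree d" and "x \<in> Od d" and "y \<in> Od d"
  shows "(1 - x * y, x\<^sup>2, - (y\<^sup>2), 1 + x * y) \<in> SL2Od d"
proof -
  have xy: "x * y \<in> Od d" and "x\<^sup>2 \<in> Od d" and "y\<^sup>2 \<in> Od d"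
    using Od_mult[OF assms(1)] assms(2,3) unfolding power2_eq_square by blast+
  moreover have "1 - x * y \<in> Od d" and "1 + x * y \<in> Od d"
    using Od_diff[OF assms(1) Od_1 xy] Od_add[OF assms(1) Od_1 xy] .
  moreover have "(1 - x * y) * (1 + x * y) - x\<^sup>2 * - (y\<^sup>2) = 1"
    by (simp add: power2_eq_square algebra_simps)
  ultimately show ?thesis
    unfolding SL2Od_def using Od_uminus by simp
qed

section \<open>Hermitian forms and planes in the upper half-space\<close>

(* (al, be, ga, de) is the matrix [[al, be], [ga, de]], as in SL2Od, and (a, B, c) is the
   Hermitian matrix [[a, B], [cnj B, c]]. *)
type_synonym mat2 = "complex \<times> complex \<times> complex \<times> complex"
type_synonym herm = "real \<times> complex \<times> real"

fun mat_mult :: "mat2 \<Rightarrow> mat2 \<Rightarrow> mat2" where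
  "mat_mult (al, be, ga, de) (al', be', ga', de') =
     (al * al' + be * ga', al * be' + be * de', ga * al' + de * ga', ga * be' + de * de')"

fun mat_det :: "mat2 \<Rightarrow> complex" where
  "mat_det (al, be, ga, de) = al * de - be * ga"

definition herm_form :: "herm \<Rightarrow> complex \<Rightarrow> complex \<Rightarrow> real" where
  "herm_form A x y = (case A of (a, B, c) \<Rightarrow>
     a * (cmod x)\<^sup>2 + 2 * Re (B * x * cnj y) + c * (cmod y)\<^sup>2)"

definition herm_sesq :: "herm \<Rightarrow> complex \<Rightarrow> complex \<Rightarrow> complex \<Rightarrow> complex \<Rightarrow> complex" where
  "herm_sesq A x y u v = (case A of (a, B, c) \<Rightarrow>
     of_real a * x * cnj u + B * x * cnj v + cnj B * y * cnj u + of_real c * y * cnj v)"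

definition herm_disc :: "herm \<Rightarrow> real" where
  "herm_disc A = (case A of (a, B, c) \<Rightarrow> (cmod B)\<^sup>2 - a * c)"

(* The Hermitian matrix g^T A conj(g). *)
definition pullback :: "herm \<Rightarrow> mat2 \<Rightarrow> herm" where
  "pullback A g = (case g of (al, be, ga, de) \<Rightarrow>
     (herm_form A al ga, herm_sesq A al ga be de, herm_form A be de))"

definition hplane_eq :: "herm \<Rightarrow> complex \<Rightarrow> real \<Rightarrow> real" where
  "hplane_eq A z t = (case A of (a, B, c) \<Rightarrow> a * ((cmod z)\<^sup>2 + t\<^sup>2) + 2 * Re (B * z) + c)"

definition hplane :: "herm \<Rightarrow> (complex \<times> real) set" where
  "hplane A = {(z, t). t > 0 \<and> hplane_eq A z t = 0}"

lemmas herm_defs = herm_form_def herm_sesq_def herm_disc_def pullback_def hplane_eq_def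

lemma plane_of_eq_hplane: "plane_of a B c = hplane (of_int a, B, of_int c)"
  unfolding plane_of_def hplane_def hplane_eq_def by simp

lemma QA_eq_herm_form: "QA a B c x y = herm_form (of_int a, B, of_int c) x y"
  unfolding QA_def herm_form_def
  by (simp add: cmod_power2) (simp add: power2_eq_square algebra_simps)

lemma herm_form_pullback:
  "herm_form (pullback A (al, be, ga, de)) x y = herm_form A (al * x + be * y) (ga * x + de * y)"
  by (cases A) (simp add: herm_defs cmod_power2, simp add: power2_eq_square algebra_simps)

lemma herm_sesq_pullback:
  "herm_sesq (pullback A (al, be, ga, de)) x y u v
     = herm_sesq A (al * x + be * y) (ga * x + de * y) (al * u + be * v) (ga * u + de * v)"
  by (cases A)
    (simp add: herm_defs complex_eq_iff cmod_power2, simp add: power2_eq_square algebra_simps)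

lemma pullback_mat_mult: "pullback A (mat_mult g h) = pullback (pullback A g) h"
proof -
  obtain al be ga de al' be' ga' de'
    where g: "g = (al, be, ga, de)" and h: "h = (al', be', ga', de')"
    by (cases g, cases h)
  have "pullback (pullback A g) h
      = (herm_form (pullback A g) al' ga', herm_sesq (pullback A g) al' ga' be' de',
         herm_form (pullback A g) be' de')"
    unfolding h pullback_def[of "pullback A g"] by simp
  also have "\<dots> = pullback A (mat_mult g h)"
    unfolding g h herm_form_pullback herm_sesq_pullback by (simp add: pullback_def)
  finally show ?thesis
    by (rule sym)
qed

lemma herm_disc_pullback: "herm_disc (pullback A g) = herm_disc A * (cmod (mat_det g))\<^sup>2"
  by (cases A; cases g) (simp add: herm_defs cmod_power2, simp add: power2_eq_square algebra_simps)

lemma hplane_eq_pullback_translation: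
  "hplane_eq (pullback A (1, 1, 0, 1)) z t = hplane_eq A (z + 1) t"
  by (cases A) (simp add: herm_defs cmod_power2, simp add: power2_eq_square algebra_simps)

lemma moeb_act_norm_identity:
  fixes al be ga de z :: complex and t :: real
  shows "((cmod (ga * z + de))\<^sup>2 + (cmod ga)\<^sup>2 * t\<^sup>2) * ((cmod (al * z + be))\<^sup>2 + (cmod al)\<^sup>2 * t\<^sup>2)
       = (cmod ((al * z + be) * cnj (ga * z + de) + al * cnj ga * complex_of_real (t\<^sup>2)))\<^sup>2
         + t\<^sup>2 * (cmod (al * de - be * ga))\<^sup>2"
  by (simp add: cmod_power2) (simp add: power2_eq_square algebra_simps)

lemma hplane_eq_pullback_expand:
  "hplane_eq (pullback (a, B, c) (al, be, ga, de)) z t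
     = a * ((cmod (al * z + be))\<^sup>2 + (cmod al)\<^sup>2 * t\<^sup>2)
       + 2 * Re (B * ((al * z + be) * cnj (ga * z + de) + al * cnj ga * complex_of_real (t\<^sup>2)))
       + c * ((cmod (ga * z + de))\<^sup>2 + (cmod ga)\<^sup>2 * t\<^sup>2)"
  by (simp add: herm_defs cmod_power2) (simp add: power2_eq_square algebra_simps)

lemma moeb_act_denominator_pos:
  assumes "mat_det (al, be, ga, de) = 1" and "t > 0"
  shows "(cmod (ga * z + de))\<^sup>2 + (cmod ga)\<^sup>2 * t\<^sup>2 > 0"
proof (cases "ga = 0")
  case True
  with assms(1) have "de \<noteq> 0"
    by auto
  with True show ?thesis
    by simp
next
  case False
  with assms(2) show ?thesis
    by (simp add: add_nonneg_pos)
qed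

lemma moeb_act_hplane_eq:
  fixes z :: complex and t :: real
  assumes det: "mat_det (al, be, ga, de) = 1" and "t > 0"
  defines "N \<equiv> (cmod (ga * z + de))\<^sup>2 + (cmod ga)\<^sup>2 * t\<^sup>2"
  shows "snd (moeb_act (al, be, ga, de) (z, t)) = t / N"
    and "hplane_eq A (fst (moeb_act (al, be, ga, de) (z, t))) (snd (moeb_act (al, be, ga, de) (z, t)))
       = hplane_eq (pullback A (al, be, ga, de)) z t / N"
proof -
  have "N > 0"
    unfolding N_def using assms(1,2) by (rule moeb_act_denominator_pos)
  define W where "W = (al * z + be) * cnj (ga * z + de) + al * cnj ga * complex_of_real (t\<^sup>2)"
  define N' where "N' = (cmod (al * z + be))\<^sup>2 + (cmod al)\<^sup>2 * t\<^sup>2"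
  have act: "moeb_act (al, be, ga, de) (z, t) = (W / complex_of_real N, t / N)"
    unfolding moeb_act_def W_def N_def by (simp add: Let_def)
  then show "snd (moeb_act (al, be, ga, de) (z, t)) = t / N"
    by simp
  have norms: "(cmod W)\<^sup>2 + t\<^sup>2 = N * N'"
    using moeb_act_norm_identity[where al = al and be = be and ga = ga and de = de and z = z and t = t] det
    unfolding W_def N_def N'_def by simp
  obtain a B c where A: "A = (a, B, c)"
    by (cases A)
  have "hplane_eq A (W / complex_of_real N) (t / N)
      = a * (((cmod W)\<^sup>2 + t\<^sup>2) / N\<^sup>2) + 2 * (Re (B * W) / N) + c"
    using \<open>N > 0\<close>
    by (simp add: A hplane_eq_def norm_divide Re_divide_of_real power_divide add_divide_distrib)
  also have "\<dots> = (a * N' + 2 * Re (B * W) + c * N) / N"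
    unfolding norms using \<open>N > 0\<close> by (simp add: field_simps power2_eq_square)
  also have "a * N' + 2 * Re (B * W) + c * N = hplane_eq (pullback A (al, be, ga, de)) z t"
    unfolding A hplane_eq_pullback_expand N'_def W_def N_def ..
  finally show "hplane_eq A (fst (moeb_act (al, be, ga, de) (z, t))) (snd (moeb_act (al, be, ga, de) (z, t)))
       = hplane_eq (pullback A (al, be, ga, de)) z t / N"
    using act by simp
qed

lemma moeb_act_H3:
  assumes "mat_det g = 1" and "P \<in> H3"
  shows "moeb_act g P \<in> H3"
proof -
  obtain al be ga de z t where g: "g = (al, be, ga, de)" and P: "P = (z, t)"
    by (cases g, cases P)
  with assms have "t > 0"
    by (simp add: H3_def)
  with moeb_act_hplane_eq(1)[OF assms(1)[unfolded g] \<open>t > 0\<close>, where z = z]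
    moeb_act_denominator_pos[OF assms(1)[unfolded g] \<open>t > 0\<close>, where z = z]
  show ?thesis
    by (simp add: g P H3_def case_prod_beta)
qed

lemma moeb_act_in_hplane_iff:
  assumes "mat_det g = 1" and "P \<in> H3"
  shows "moeb_act g P \<in> hplane A \<longleftrightarrow> P \<in> hplane (pullback A g)"
proof -
  obtain al be ga de z t where g: "g = (al, be, ga, de)" and P: "P = (z, t)"
    by (cases g, cases P)
  with assms have "t > 0"
    by (simp add: H3_def)
  obtain N where "N > 0"
    and "hplane_eq A (fst (moeb_act g P)) (snd (moeb_act g P)) = hplane_eq (pullback A g) z t / N"
    using moeb_act_hplane_eq(2)[OF assms(1)[unfolded g] \<open>t > 0\<close>]
      moeb_act_denominator_pos[OF assms(1)[unfolded g] \<open>t > 0\<close>]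
    unfolding g P by blast
  moreover have "snd (moeb_act g P) > 0"
    using moeb_act_H3[OF assms] by (simp add: H3_def case_prod_beta)
  ultimately show ?thesis
    using \<open>t > 0\<close> by (cases "moeb_act g P") (auto simp: P hplane_def)
qed

(* For n \<noteq> 0, hplane (n, B, m) is the hemisphere of squared radius herm_disc (n, B, m) / n^2
   centred at - cnj B / n. *)
lemma hplane_eq_recentred:
  assumes "n \<noteq> 0"
  shows "hplane_eq (n, B, m) (of_real e - cnj B / of_real n) t
    = n * (e\<^sup>2 + t\<^sup>2) - herm_disc (n, B, m) / n"
  using assms
  by (simp add: herm_defs cmod_power2 Re_divide Im_divide) (simp add: field_simps power2_eq_square)

lemma hplane_meets_translate:
  assumes "n \<noteq> 0" and "n\<^sup>2 < 4 * herm_disc (n, B, m)"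
  shows "\<exists>z t. (z, t) \<in> hplane (n, B, m) \<and> (z + 1, t) \<in> hplane (n, B, m)"
proof -
  define r2 where "r2 = herm_disc (n, B, m) / n\<^sup>2"
  define t where "t = sqrt (r2 - 1 / 4)"
  have "r2 - 1 / 4 > 0"
    using assms by (simp add: r2_def field_simps)
  then have "t > 0" and t2: "t\<^sup>2 = r2 - 1 / 4"
    by (simp_all add: t_def)
  have disc: "herm_disc (n, B, m) / n = n * r2"
    using assms(1) by (simp add: r2_def power2_eq_square)
  have mem: "(of_real e - cnj B / of_real n, t) \<in> hplane (n, B, m)" if "e\<^sup>2 = 1 / 4" for e
    using \<open>t > 0\<close>
    unfolding hplane_def mem_Collect_eq case_prod_conv hplane_eq_recentred[OF assms(1)]
    by (simp add: disc t2 that algebra_simps)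
  have "(of_real (- 1 / 2) - cnj B / of_real n, t) \<in> hplane (n, B, m)"
    using mem[of "- 1 / 2"] by (simp add: power2_eq_square)
  moreover have "(of_real (- 1 / 2) - cnj B / of_real n + 1, t) \<in> hplane (n, B, m)"
    using mem[of "1 / 2"] by (simp add: power2_eq_square)
  ultimately show ?thesis
    by blast
qed

lemma hplane_not_translation_invariant:
  assumes "n \<noteq> 0" and "herm_disc (n, B, m) > 0"
  shows "\<exists>z t. (z, t) \<in> hplane (n, B, m) \<and> (z + 1, t) \<notin> hplane (n, B, m)"
proof -
  define r2 where "r2 = herm_disc (n, B, m) / n\<^sup>2"
  define t where "t = sqrt r2"
  have "t > 0" and t2: "t\<^sup>2 = r2"
    using assms by (simp_all add: t_def r2_def)
  have disc: "herm_disc (n, B, m) / n = n * r2"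
    using assms(1) by (simp add: r2_def power2_eq_square)
  have mem_iff: "(of_real e - cnj B / of_real n, t) \<in> hplane (n, B, m) \<longleftrightarrow> e = 0" for e
    using \<open>t > 0\<close> assms(1)
    unfolding hplane_def mem_Collect_eq case_prod_conv hplane_eq_recentred[OF assms(1)]
    by (simp add: disc t2 algebra_simps)
  have "(of_real 0 - cnj B / of_real n, t) \<in> hplane (n, B, m)"
    using mem_iff[of 0] by simp
  moreover have "(of_real 0 - cnj B / of_real n + 1, t) \<notin> hplane (n, B, m)"
    using mem_iff[of 1] by simp
  ultimately show ?thesis
    by blast
qed

lemma moeb_act_conj_translation_in_hplane_iff:
  assumes "mat_det g = 1" and "mat_det M = 1" and "mat_mult M g = mat_mult g (1, 1, 0, 1)"
    and "t > 0"
  shows "moeb_act M (moeb_act g (z, t)) \<in> hplane A \<longleftrightarrow> (z + 1, t) \<in> hplane (pullback A g)"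
proof -
  have "(z, t) \<in> H3"
    using assms(4) by (simp add: H3_def)
  then have "moeb_act M (moeb_act g (z, t)) \<in> hplane A
      \<longleftrightarrow> (z, t) \<in> hplane (pullback (pullback A M) g)"
    using moeb_act_in_hplane_iff moeb_act_H3 assms(1,2) by metis
  also have "pullback (pullback A M) g = pullback (pullback A g) (1, 1, 0, 1)"
    using assms(3) by (metis pullback_mat_mult)
  finally show ?thesis
    using assms(4) by (simp add: hplane_def hplane_eq_pullback_translation)
qed

lemma conj_translation_moves_hplane:
  assumes g: "mat_det g = 1" and M: "mat_det M = 1"
    and conj: "mat_mult M g = mat_mult g (1, 1, 0, 1)"
    and n: "fst (pullback A g) \<noteq> 0" and small: "(fst (pullback A g))\<^sup>2 < 4 * herm_disc A"
  shows "moeb_act M ` hplane A \<noteq> hplane A" and "moeb_act M ` hplane A \<inter> hplane A \<noteq> {}"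
proof -
  obtain n B m where A': "pullback A g = (n, B, m)"
    by (cases "pullback A g")
  have "herm_disc (n, B, m) = herm_disc A"
    using herm_disc_pullback[of A g] g A' by simp
  with n small A' have "n \<noteq> 0" and small': "n\<^sup>2 < 4 * herm_disc (n, B, m)"
    by simp_all
  have g_mem: "moeb_act g (z, t) \<in> hplane A \<longleftrightarrow> (z, t) \<in> hplane (n, B, m)" if "t > 0" for z t
    using moeb_act_in_hplane_iff[OF g] that A' by (simp add: H3_def)
  have Mg_mem: "moeb_act M (moeb_act g (z, t)) \<in> hplane A \<longleftrightarrow> (z + 1, t) \<in> hplane (n, B, m)"
    if "t > 0" for z t
    using moeb_act_conj_translation_in_hplane_iff[OF g M conj that] A' by simp
  obtain z t where "(z, t) \<in> hplane (n, B, m)" and "(z + 1, t) \<in> hplane (n, B, m)"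
    using hplane_meets_translate \<open>n \<noteq> 0\<close> small' by blast
  then have "moeb_act g (z, t) \<in> hplane A" and "moeb_act M (moeb_act g (z, t)) \<in> hplane A"
    using g_mem Mg_mem by (auto simp: hplane_def)
  then show "moeb_act M ` hplane A \<inter> hplane A \<noteq> {}"
    by blast
  have "herm_disc (n, B, m) > 0"
    using small' zero_le_power2[of n] by linarith
  then obtain z t where "(z, t) \<in> hplane (n, B, m)" and "(z + 1, t) \<notin> hplane (n, B, m)"
    using hplane_not_translation_invariant \<open>n \<noteq> 0\<close> by blast
  then have "moeb_act g (z, t) \<in> hplane A" and "moeb_act M (moeb_act g (z, t)) \<notin> hplane A"
    using g_mem Mg_mem by (auto simp: hplane_def)
  then show "moeb_act M ` hplane A \<noteq> hplane A"
    by blast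
qed

lemma parabolic_conj_translation:
  assumes "mat_det (x, u, y, v) = 1"
  shows "mat_mult (1 - x * y, x\<^sup>2, - (y\<^sup>2), 1 + x * y) (x, u, y, v)
    = mat_mult (x, u, y, v) (1, 1, 0, 1)"
proof -
  have det: "x * v - u * y = 1"
    using assms by simp
  have "(1 - x * y) * u + x\<^sup>2 * v = u + x * (x * v - u * y)"
    and "- (y\<^sup>2) * u + (1 + x * y) * v = v + y * (x * v - u * y)"
    by (simp_all add: power2_eq_square algebra_simps)
  then show ?thesis
    unfolding det by (simp add: power2_eq_square algebra_simps)
qed

lemma unimodular_completion:
  assumes "(x, y) \<noteq> (0, 0)"
  obtains u v where "mat_det (x, u, y, v) = 1"
proof (cases "x = 0")
  case True
  with assms have "y \<noteq> 0"
    by simp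
  with True show ?thesis
    using that[of "- 1 / y" 0] by simp
next
  case False
  then show ?thesis
    using that[of 0 "1 / x"] by simp
qed

lemma moeb_act_parabolic_moves_hplane:
  assumes "herm_form A x y \<noteq> 0" and "(herm_form A x y)\<^sup>2 < 4 * herm_disc A"
  defines "M \<equiv> (1 - x * y, x\<^sup>2, - (y\<^sup>2), 1 + x * y)"
  shows "moeb_act M ` hplane A \<noteq> hplane A" and "moeb_act M ` hplane A \<inter> hplane A \<noteq> {}"
proof -
  have "(x, y) \<noteq> (0, 0)"
    using assms(1) by (cases A) (auto simp: herm_form_def)
  then obtain u v where g: "mat_det (x, u, y, v) = 1"
    by (rule unimodular_completion)
  have "mat_det M = 1"
    by (simp add: M_def power2_eq_square algebra_simps)
  moreover have "fst (pullback A (x, u, y, v)) = herm_form A x y"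
    by (simp add: pullback_def)
  ultimately show "moeb_act M ` hplane A \<noteq> hplane A" and "moeb_act M ` hplane A \<inter> hplane A \<noteq> {}"
    using conj_translation_moves_hplane[OF g _ parabolic_conj_translation[OF g]] assms(1,2)
    unfolding M_def by simp_all
qed

theorem corollary3p6:
  fixes d :: nat and a c :: int and B :: complex
  assumes "d > 0" and "squarefree d"
    and "B \<in> Od d"
    and "(cmod B)\<^sup>2 - of_int (a * c) > 0"
    and "embedded_surface d a B c"
  shows "\<forall>x \<in> Od d. \<forall>y \<in> Od d. QA a B c x y \<noteq> 0 \<longrightarrow>
           4 * ((cmod B)\<^sup>2 - of_int (a * c)) \<le> (QA a B c x y)\<^sup>2"
proof (intro ballI impI)
  fix x y
  assume x: "x \<in> Od d" and y: "y \<in> Od d" and nonzero: "QA a B c x y \<noteq> 0"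
  define A where "A = (real_of_int a, B, real_of_int c)"
  define M where "M = (1 - x * y, x\<^sup>2, - (y\<^sup>2), 1 + x * y)"
  have "M \<in> SL2Od d"
    unfolding M_def using assms(2) x y by (rule parabolic_in_SL2Od)
  with assms(5) have "moeb_act M ` hplane A = hplane A \<or> moeb_act M ` hplane A \<inter> hplane A = {}"
    unfolding embedded_surface_def plane_of_eq_hplane A_def by blast
  then have "\<not> (herm_form A x y)\<^sup>2 < 4 * herm_disc A"
    using moeb_act_parabolic_moves_hplane[of A x y] nonzero
    unfolding M_def A_def QA_eq_herm_form by blast
  then show "4 * ((cmod B)\<^sup>2 - of_int (a * c)) \<le> (QA a B c x y)\<^sup>2"
    by (simp add: A_def QA_eq_herm_form herm_disc_def)
qed

end
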